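(* There is no set $\mathcal{S}$ of Turing degrees such that $\mathbb{R}_{\mathcal{S}}$ is a Luzin set or a Sierpinski set.
   Context: $\mathbb{R}_{\mathcal{S}}$ is the set of reals whose Turing degree lies in $\mathcal{S}$. A set $A\subseteq\mathbb{R}$ is a Luzin set if it is uncountable and its intersection with every meager set is countable; it is a Sierpinski set if it is uncountable and its intersection with every Lebesgue null set is countable. *)

theory Defs
  imports "HOL-Analysis.Analysis"
begin

text \<open>Kleene-style mu-recursive programs with access to an orc set of naturals.
  Oracle n returns 1 if the first argument belongs to the query set, else 0.\<close>

datatype recf =
    Zero
  | Succ
  | Proj nat
  | Oracle
  | Comp recf "recf list"
  | PrimRec recf recf
  | Mu recf

inductive eval :: "nat set \<Rightarrow> recf \<Rightarrow> nat list \<Rightarrow> nat \<Rightarrow> bool" for X :: "nat set" where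
  zero: "eval X Zero xs 0"
| succ: "eval X Succ (x # xs) (Suc x)"
| proj: "i < length xs \<Longrightarrow> eval X (Proj i) xs (xs ! i)"
| orc: "eval X Oracle (x # xs) (if x \<in> X then 1 else 0)"
| comp: "list_all2 (\<lambda>g y. eval X g xs y) gs ys \<Longrightarrow> eval X f ys z \<Longrightarrow> eval X (Comp f gs) xs z"
| prim0: "eval X f xs y \<Longrightarrow> eval X (PrimRec f g) (0 # xs) y"
| primS: "eval X (PrimRec f g) (n # xs) y \<Longrightarrow> eval X g (n # y # xs) z
          \<Longrightarrow> eval X (PrimRec f g) (Suc n # xs) z"
| mu: "eval X f (n # xs) 0 \<Longrightarrow> (\<forall>m<n. \<exists>k. k > 0 \<and> eval X f (m # xs) k)
          \<Longrightarrow> eval X (Mu f) xs n"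

definition turing_le :: "nat set \<Rightarrow> nat set \<Rightarrow> bool" where
  "turing_le A B \<longleftrightarrow> (\<exists>p. \<forall>n. eval B p [n] (if n \<in> A then 1 else 0))"

definition rat_code :: "nat \<Rightarrow> real" where
  "rat_code n = (case prod_decode n of (i, b) \<Rightarrow> real_of_int (int_decode i) / real (Suc b))"

text \<open>A real is identified (for computability purposes) with its left Dedekind cut,
  coded as a set of naturals.\<close>
definition real_code :: "real \<Rightarrow> nat set" where
  "real_code x = {n. rat_code n < x}"

definition turing_equiv_real :: "real \<Rightarrow> real \<Rightarrow> bool" where
  "turing_equiv_real x y \<longleftrightarrow> turing_le (real_code x) (real_code y) \<and> turing_le (real_code y) (real_code x)"

definition turing_degree :: "real \<Rightarrow> real set" where
  "turing_degree x = {y. turing_equiv_real y x}"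

definition turing_degrees :: "real set set" where
  "turing_degrees = range turing_degree"

definition reals_of_degrees :: "real set set \<Rightarrow> real set" where
  "reals_of_degrees S = {x. turing_degree x \<in> S}"

definition nowhere_dense :: "real set \<Rightarrow> bool" where
  "nowhere_dense A \<longleftrightarrow> interior (closure A) = {}"

definition meager :: "real set \<Rightarrow> bool" where
  "meager M \<longleftrightarrow> (\<exists>F :: nat \<Rightarrow> real set. (\<forall>n. nowhere_dense (F n)) \<and> M \<subseteq> (\<Union>n. F n))"

definition luzin_set :: "real set \<Rightarrow> bool" where
  "luzin_set A \<longleftrightarrow> uncountable A \<and> (\<forall>M. meager M \<longrightarrow> countable (A \<inter> M))"

definition sierpinski_set :: "real set \<Rightarrow> bool" where
  "sierpinski_set A \<longleftrightarrow> uncountable A \<and> (\<forall>N. N \<in> null_sets lebesgue \<longrightarrow> countable (A \<inter> N))"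

end

theory Submission
  imports Defs
begin

text \<open>
  Let \<open>c(A) = \<Sum>n\<in>A. 2 / 3^(n+1)\<close> and let \<open>g(x) = c(code x)\<close>, where \<open>code x\<close> is the
  Dedekind cut of \<open>x\<close> coded as a set of naturals. Then \<open>g\<close> is injective and takes values in the
  middle-thirds Cantor set, which is closed and null, hence also nowhere dense. Whenever \<open>g(x)\<close>
  is irrational, i.e. for all but countably many \<open>x\<close>, \<open>g(x)\<close> is Turing equivalent to \<open>x\<close>: the
  ternary digits of \<open>c(A)\<close>, i.e. the elements of \<open>A\<close>, are decided by comparing \<open>c(A)\<close> with the
  midpoints of its stage intervals, and conversely a rational \<open>q \<noteq> c(A)\<close> is placed relative
  to \<open>c(A)\<close> by searching for a stage interval that excludes \<open>q\<close>. So an uncountable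
  degree-invariant set \<open>R\<^sub>S\<close> meets the Cantor set in an uncountable set, and is therefore
  neither Luzin nor Sierpinski.
\<close>

section \<open>Relative computability\<close>

definition computable :: "nat set \<Rightarrow> nat \<Rightarrow> (nat list \<Rightarrow> nat) \<Rightarrow> bool" where
  "computable X k f \<longleftrightarrow> (\<exists>p. \<forall>xs. length xs = k \<longrightarrow> eval X p xs (f xs))"

definition decidable :: "nat set \<Rightarrow> nat \<Rightarrow> (nat list \<Rightarrow> bool) \<Rightarrow> bool" where
  "decidable X k P \<longleftrightarrow> computable X k (\<lambda>xs. if P xs then 1 else 0)"

lemma computable_cong:
  "computable X k f \<Longrightarrow> (\<And>xs. length xs = k \<Longrightarrow> f xs = g xs) \<Longrightarrow> computable X k g"
  unfolding computable_def by metis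

lemma decidable_cong:
  "decidable X k P \<Longrightarrow> (\<And>xs. length xs = k \<Longrightarrow> P xs \<longleftrightarrow> Q xs) \<Longrightarrow> decidable X k Q"
  unfolding decidable_def by (erule computable_cong) simp

lemma computable_zero: "computable X k (\<lambda>xs. 0)"
  unfolding computable_def by (auto intro: eval.zero)

lemma computable_proj: "i < k \<Longrightarrow> computable X k (\<lambda>xs. xs ! i)"
  unfolding computable_def by (auto intro: eval.proj)

lemma computable_comp:
  assumes h: "computable X (length fs) h" and fs: "\<forall>f\<in>set fs. computable X k f"
  shows "computable X k (\<lambda>xs. h (map (\<lambda>f. f xs) fs))"
proof -
  obtain q where q: "\<And>ys. length ys = length fs \<Longrightarrow> eval X q ys (h ys)"
    using h unfolding computable_def by blast
  have "\<forall>f\<in>set fs. \<exists>p. \<forall>xs. length xs = k \<longrightarrow> eval X p xs (f xs)"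
    using fs unfolding computable_def by blast
  then obtain prog where prog: "\<And>f xs. f \<in> set fs \<Longrightarrow> length xs = k \<Longrightarrow> eval X (prog f) xs (f xs)"
    by metis
  have "eval X (Comp q (map prog fs)) xs (h (map (\<lambda>f. f xs) fs))" if "length xs = k" for xs
    by (rule eval.comp[OF _ q]) (auto simp: list_all2_map1 list_all2_map2 list.rel_refl_strong prog that)
  then show ?thesis
    unfolding computable_def by blast
qed

lemma computable_comp1:
  "computable X 1 h \<Longrightarrow> computable X k f \<Longrightarrow> computable X k (\<lambda>xs. h [f xs])"
  using computable_comp[of X "[f]" h k] by simp

lemma computable_comp2:
  "computable X 2 h \<Longrightarrow> computable X k f \<Longrightarrow> computable X k g \<Longrightarrow> computable X k (\<lambda>xs. h [f xs, g xs])"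
  using computable_comp[of X "[f, g]" h k] by (simp add: numeral_2_eq_2)

lemma computable_Suc:
  assumes "computable X k f" shows "computable X k (\<lambda>xs. Suc (f xs))"
proof -
  have "computable X 1 (\<lambda>xs. Suc (hd xs))"
    unfolding computable_def by (rule exI[of _ Succ]) (auto simp: length_Suc_conv intro: eval.succ)
  from computable_comp1[OF this assms] show ?thesis
    by simp
qed

lemma decidable_mem:
  assumes "computable X k f" shows "decidable X k (\<lambda>xs. f xs \<in> X)"
proof -
  have "eval X Oracle xs (if hd xs \<in> X then 1 else 0)" if xs: "length xs = 1" for xs
  proof -
    obtain y where "xs = [y]"
      using xs by (auto simp: length_Suc_conv)
    then show ?thesis
      using eval.orc[of X y "[]"] by (simp only: list.sel)
  qed
  then have "computable X 1 (\<lambda>xs. if hd xs \<in> X then 1 else 0)"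
    unfolding computable_def by blast
  from computable_comp1[OF this assms] show ?thesis
    unfolding decidable_def by simp
qed

lemma computable_prim_rec:
  assumes f: "computable X k f" and g: "computable X (Suc (Suc k)) g"
    and h0: "\<And>ys. length ys = k \<Longrightarrow> h (0 # ys) = f ys"
    and hSuc: "\<And>n ys. length ys = k \<Longrightarrow> h (Suc n # ys) = g (n # h (n # ys) # ys)"
  shows "computable X (Suc k) h"
proof -
  obtain p where p: "\<And>ys. length ys = k \<Longrightarrow> eval X p ys (f ys)"
    using f unfolding computable_def by blast
  obtain q where q: "\<And>ys. length ys = Suc (Suc k) \<Longrightarrow> eval X q ys (g ys)"
    using g unfolding computable_def by blast
  have "eval X (PrimRec p q) (n # ys) (h (n # ys))" if "length ys = k" for n ys
  proof (induction n)
    case 0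
    show ?case using eval.prim0[OF p] h0 that by simp
  next
    case (Suc n)
    show ?case using eval.primS[OF Suc q] hSuc that by simp
  qed
  then show ?thesis
    unfolding computable_def by (auto simp: length_Suc_conv)
qed

lemma computable_Least:
  assumes f: "computable X (Suc k) f" and ex: "\<And>xs. length xs = k \<Longrightarrow> \<exists>n. f (n # xs) = 0"
  shows "computable X k (\<lambda>xs. LEAST n. f (n # xs) = 0)"
proof -
  obtain p where p: "\<And>ys. length ys = Suc k \<Longrightarrow> eval X p ys (f ys)"
    using f unfolding computable_def by blast
  have "eval X (Mu p) xs (LEAST n. f (n # xs) = 0)" if xs: "length xs = k" for xs
  proof (rule eval.mu)
    show "eval X p ((LEAST n. f (n # xs) = 0) # xs) 0"
      using p[of "(LEAST n. f (n # xs) = 0) # xs"] LeastI_ex[OF ex[OF xs]] xs by simp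
    show "\<forall>m<(LEAST n. f (n # xs) = 0). \<exists>k>0. eval X p (m # xs) k"
    proof (intro allI impI)
      fix m assume "m < (LEAST n. f (n # xs) = 0)"
      then have "f (m # xs) \<noteq> 0"
        by (rule not_less_Least)
      then show "\<exists>k>0. eval X p (m # xs) k"
        using p[of "m # xs"] xs by auto
    qed
  qed
  then show ?thesis
    unfolding computable_def by blast
qed

lemma computable_const: "computable X k (\<lambda>xs. c)"
  by (induction c) (auto intro: computable_zero computable_Suc)

lemma computable_unary_rec:
  assumes "h 0 = c" "\<And>n. h (Suc n) = s n (h n)"
    and s: "computable X 2 (\<lambda>xs. s (xs ! 0) (xs ! 1))" and f: "computable X k f"
  shows "computable X k (\<lambda>xs. h (f xs))"
proof -
  have "computable X (Suc 0) (\<lambda>xs. h (hd xs))"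
    by (rule computable_prim_rec[OF computable_const s[unfolded numeral_2_eq_2]]) (simp_all add: assms)
  then have "computable X 1 (\<lambda>xs. h (hd xs))"
    by simp
  from computable_comp1[OF this f] show ?thesis
    by simp
qed

lemma computable_binary_rec:
  assumes "\<And>m. h 0 m = c m" "\<And>n m. h (Suc n) m = s n (h n m) m"
    and c: "computable X 1 (\<lambda>xs. c (xs ! 0))"
    and s: "computable X 3 (\<lambda>xs. s (xs ! 0) (xs ! 1) (xs ! 2))"
    and f: "computable X k f" and g: "computable X k g"
  shows "computable X k (\<lambda>xs. h (f xs) (g xs))"
proof -
  have "computable X (Suc (Suc 0)) (\<lambda>xs. h (xs ! 0) (xs ! 1))"
    by (rule computable_prim_rec[OF c[unfolded One_nat_def] s[unfolded numeral_3_eq_3]])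
      (auto simp: assms length_Suc_conv)
  then have "computable X (Suc (Suc 0)) (\<lambda>xs. h (hd xs) (hd (tl xs)))"
    by (rule computable_cong) (auto simp: length_Suc_conv)
  then have "computable X 2 (\<lambda>xs. h (hd xs) (hd (tl xs)))"
    by (simp add: numeral_2_eq_2)
  from computable_comp2[OF this f g] show ?thesis
    by simp
qed

lemma computable_add:
  assumes "computable X k f" "computable X k g"
  shows "computable X k (\<lambda>xs. f xs + g xs)"
proof (rule computable_binary_rec[where h = "(+)" and c = "\<lambda>m. m" and s = "\<lambda>n y m. Suc y"])
  show "computable X 1 (\<lambda>xs. xs ! 0)"
    by (rule computable_proj) simp
  show "computable X 3 (\<lambda>xs. Suc (xs ! 1))"
    by (rule computable_Suc, rule computable_proj) simp
qed (simp_all add: assms)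

lemma computable_mult:
  assumes "computable X k f" "computable X k g"
  shows "computable X k (\<lambda>xs. f xs * g xs)"
proof (rule computable_binary_rec[where h = "(*)" and c = "\<lambda>m. 0" and s = "\<lambda>n y m. m + y"])
  show "computable X 3 (\<lambda>xs. xs ! 2 + xs ! 1)"
    by (rule computable_add; rule computable_proj) simp_all
qed (simp_all add: assms computable_zero)

lemma computable_pred: "computable X k f \<Longrightarrow> computable X k (\<lambda>xs. f xs - 1)"
proof (rule computable_unary_rec[where h = "\<lambda>n. n - 1" and c = 0 and s = "\<lambda>n y. n"])
  show "computable X 2 (\<lambda>xs. xs ! 0)"
    by (rule computable_proj) simp
qed simp_all

lemma computable_diff:
  assumes "computable X k f" "computable X k g"
  shows "computable X k (\<lambda>xs. f xs - g xs)"
proof (rule computable_binary_rec[where h = "\<lambda>n m. m - n" and c = "\<lambda>m. m" and s = "\<lambda>n y m. y - 1"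
      and f = g and g = f])
  show "computable X 1 (\<lambda>xs. xs ! 0)"
    by (rule computable_proj) simp
  show "computable X 3 (\<lambda>xs. xs ! 1 - 1)"
    by (rule computable_pred, rule computable_proj) simp
qed (simp_all add: assms)

lemma computable_power: "computable X k f \<Longrightarrow> computable X k (\<lambda>xs. c ^ f xs)"
proof (rule computable_unary_rec[where h = "\<lambda>n. c ^ n" and s = "\<lambda>n y. c * y"])
  show "computable X 2 (\<lambda>xs. c * xs ! 1)"
    by (rule computable_mult[OF computable_const computable_proj]) simp
qed simp_all

lemma computable_triangle: "computable X k f \<Longrightarrow> computable X k (\<lambda>xs. triangle (f xs))"
proof (rule computable_unary_rec[where h = triangle and s = "\<lambda>n y. y + Suc n"])
  show "computable X 2 (\<lambda>xs. xs ! 1 + Suc (xs ! 0))"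
    by (intro computable_add computable_Suc computable_proj) simp_all
qed simp_all

lemma computable_If:
  assumes P: "decidable X k P" and f: "computable X k f" and g: "computable X k g"
  shows "computable X k (\<lambda>xs. if P xs then f xs else g xs)"
proof -
  have "computable X k (\<lambda>xs. (if P xs then 1 else 0) * f xs + (1 - (if P xs then 1 else 0)) * g xs)"
    using P unfolding decidable_def
    by (intro computable_add computable_mult computable_diff computable_const f g)
  then show ?thesis
    by (rule computable_cong) simp
qed

lemma decidable_not:
  assumes "decidable X k P" shows "decidable X k (\<lambda>xs. \<not> P xs)"
proof -
  have "computable X k (\<lambda>xs. if P xs then 0 else 1)"
    by (rule computable_If[OF assms computable_const computable_const])
  then show ?thesis
    unfolding decidable_def by (rule computable_cong) simp
qed

lemma decidable_conj:
  assumes "decidable X k P" "decidable X k Q" shows "decidable X k (\<lambda>xs. P xs \<and> Q xs)"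
proof -
  have "computable X k (\<lambda>xs. if P xs then (if Q xs then 1 else 0) else 0)"
    using assms(2) unfolding decidable_def by (rule computable_If[OF assms(1) _ computable_const])
  then show ?thesis
    unfolding decidable_def by (rule computable_cong) simp
qed

lemma decidable_disj:
  assumes "decidable X k P" "decidable X k Q" shows "decidable X k (\<lambda>xs. P xs \<or> Q xs)"
proof -
  have "computable X k (\<lambda>xs. if P xs then 1 else (if Q xs then 1 else 0))"
    using assms(2) unfolding decidable_def by (rule computable_If[OF assms(1) computable_const])
  then show ?thesis
    unfolding decidable_def by (rule computable_cong) simp
qed

lemma decidable_eq_0: "computable X k f \<Longrightarrow> decidable X k (\<lambda>xs. f xs = 0)"
  unfolding decidable_def
  by (rule computable_unary_rec[where h = "\<lambda>n. if n = 0 then 1 else 0" and s = "\<lambda>n y. 0"])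
    (simp_all add: computable_const)

lemma decidable_less:
  assumes "computable X k f" "computable X k g" shows "decidable X k (\<lambda>xs. f xs < g xs)"
  using decidable_not[OF decidable_eq_0[OF computable_diff[OF assms(2,1)]]]
  by (rule decidable_cong) auto

lemma decidable_even: "computable X k f \<Longrightarrow> decidable X k (\<lambda>xs. even (f xs))"
  unfolding decidable_def
proof (rule computable_unary_rec[where h = "\<lambda>n. if even n then 1 else 0" and s = "\<lambda>n y. 1 - y"])
  show "computable X 2 (\<lambda>xs. 1 - xs ! 1)"
    by (rule computable_diff[OF computable_const computable_proj]) simp
qed simp_all

lemma computable_div2: "computable X k f \<Longrightarrow> computable X k (\<lambda>xs. f xs div 2)"
proof (rule computable_unary_rec[where h = "\<lambda>n. n div 2" and s = "\<lambda>n y. if even n then y else Suc y"])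
  show "computable X 2 (\<lambda>xs. if even (xs ! 0) then xs ! 1 else Suc (xs ! 1))"
    by (intro computable_If decidable_even computable_Suc computable_proj) simp_all
qed (auto elim: oddE)

lemma computable_Least_decidable:
  assumes "decidable X (Suc k) P" and "\<And>xs. length xs = k \<Longrightarrow> \<exists>n. P (n # xs)"
  shows "computable X k (\<lambda>xs. LEAST n. P (n # xs))"
proof -
  have "computable X k (\<lambda>xs. LEAST n. (if \<not> P (n # xs) then 1 else 0) = (0::nat))"
    using decidable_not[OF assms(1)] unfolding decidable_def
    by (rule computable_Least) (use assms(2) in auto)
  moreover have "\<And>n xs. ((if \<not> P (n # xs) then 1 else 0) = (0::nat)) \<longleftrightarrow> P (n # xs)"
    by simp
  ultimately show ?thesis
    by (simp only:)
qed

lemma decidable_imp_turing_le: "decidable X 1 (\<lambda>xs. xs ! 0 \<in> A) \<Longrightarrow> turing_le A X"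
  unfolding decidable_def computable_def turing_le_def
  by (metis One_nat_def length_Cons list.size(3) nth_Cons_0)

section \<open>Turing reducibility and codes of rationals\<close>

fun subst_oracle :: "recf \<Rightarrow> recf \<Rightarrow> recf" where
  "subst_oracle p Oracle = Comp p [Proj 0]"
| "subst_oracle p (Comp f gs) = Comp (subst_oracle p f) (map (subst_oracle p) gs)"
| "subst_oracle p (PrimRec f g) = PrimRec (subst_oracle p f) (subst_oracle p g)"
| "subst_oracle p (Mu f) = Mu (subst_oracle p f)"
| "subst_oracle p Zero = Zero"
| "subst_oracle p Succ = Succ"
| "subst_oracle p (Proj i) = Proj i"

lemma eval_subst_oracle:
  assumes "eval B q xs z" and p: "\<And>n. eval C p [n] (if n \<in> B then 1 else 0)"
  shows "eval C (subst_oracle p q) xs z"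
  using assms(1)
proof (induction rule: eval.induct)
  case (orc x xs)
  have "list_all2 (\<lambda>g. eval C g (x # xs)) [Proj 0] [x]"
    using eval.proj[of 0 "x # xs" C] by simp
  from eval.comp[OF this p] show ?case
    by simp
next
  case (comp xs gs ys f z)
  then have "list_all2 (\<lambda>g y. eval C g xs y) (map (subst_oracle p) gs) ys"
    by (auto simp: list_all2_map1 elim: list_all2_mono)
  with comp show ?case
    by (auto intro: eval.comp)
qed (auto intro: eval.intros)

lemma turing_le_trans: "turing_le A B \<Longrightarrow> turing_le B C \<Longrightarrow> turing_le A C"
  unfolding turing_le_def using eval_subst_oracle by blast

lemma reals_of_degrees_turing_equiv:
  assumes "x \<in> reals_of_degrees S" and "turing_equiv_real y x"
  shows "y \<in> reals_of_degrees S"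
proof -
  have "turing_degree y = turing_degree x"
    using assms(2) unfolding turing_degree_def turing_equiv_real_def
    by (auto intro: turing_le_trans)
  with assms(1) show ?thesis
    unfolding reals_of_degrees_def by simp
qed

lemma computable_prod_encode:
  "computable X k f \<Longrightarrow> computable X k g \<Longrightarrow> computable X k (\<lambda>xs. prod_encode (f xs, g xs))"
  unfolding prod_encode_def by (simp add: computable_add computable_triangle)

lemma prod_decode_eq_Least:
  fixes m :: nat
  defines "d \<equiv> LEAST d. m < triangle (Suc d)"
  shows "prod_decode m = (m - triangle d, d - (m - triangle d))"
proof -
  have ex: "\<exists>d. m < triangle (Suc d)"
    by (rule exI[of _ m]) simp
  have upper: "m < triangle d + Suc d"
    using LeastI_ex[OF ex] unfolding d_def by simp
  have lower: "triangle d \<le> m"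
  proof (cases d)
    case (Suc e)
    then have "\<not> m < triangle (Suc e)"
      unfolding d_def using not_less_Least lessI by metis
    with Suc show ?thesis
      by simp
  qed simp
  have "prod_encode (m - triangle d, d - (m - triangle d)) = m"
    using lower upper unfolding prod_encode_def by simp
  then show ?thesis
    by (metis prod_encode_inverse)
qed

lemma computable_prod_decode:
  assumes f: "computable X k f"
  shows "computable X k (\<lambda>xs. fst (prod_decode (f xs)))"
    and "computable X k (\<lambda>xs. snd (prod_decode (f xs)))"
proof -
  have "computable X (Suc 0) (\<lambda>xs. LEAST d. (d # xs) ! 1 < triangle (Suc ((d # xs) ! 0)))"
  proof (rule computable_Least_decidable)
    show "decidable X (Suc (Suc 0)) (\<lambda>ys. ys ! 1 < triangle (Suc (ys ! 0)))"
      by (intro decidable_less computable_triangle computable_Suc computable_proj) auto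
    show "\<exists>d. (d # xs) ! 1 < triangle (Suc ((d # xs) ! 0))" for xs :: "nat list"
      by (rule exI[of _ "xs ! 0"]) simp
  qed
  then have "computable X 1 (\<lambda>xs. LEAST d. hd xs < triangle (Suc d))"
    unfolding One_nat_def by (rule computable_cong) (auto simp: length_Suc_conv)
  from computable_comp1[OF this f]
  have diag: "computable X k (\<lambda>xs. LEAST d. f xs < triangle (Suc d))"
    by simp
  show "computable X k (\<lambda>xs. fst (prod_decode (f xs)))"
    unfolding prod_decode_eq_Least fst_conv by (intro computable_diff computable_triangle f diag)
  show "computable X k (\<lambda>xs. snd (prod_decode (f xs)))"
    unfolding prod_decode_eq_Least snd_conv by (intro computable_diff computable_triangle f diag)
qed

lemma int_decode_even: "even i \<Longrightarrow> int_decode i = int (i div 2)"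
  by (simp add: int_decode_def sum_decode_def)

lemma int_decode_odd: "odd i \<Longrightarrow> int_decode i < 0"
  by (simp add: int_decode_def sum_decode_def)

lemma of_nat_divide_less_iff:
  "0 < b \<Longrightarrow> 0 < d \<Longrightarrow> real a / real b < real c / real d \<longleftrightarrow> a * d < c * b"
  by (simp add: field_simps flip: of_nat_mult)

lemma rat_code_even:
  assumes "even (fst (prod_decode m))"
  shows "rat_code m = real (fst (prod_decode m) div 2) / real (Suc (snd (prod_decode m)))"
  using assms by (cases "prod_decode m") (simp add: rat_code_def int_decode_even)

lemma rat_code_odd: "odd (fst (prod_decode m)) \<Longrightarrow> rat_code m < 0"
  using int_decode_odd by (cases "prod_decode m") (simp add: rat_code_def divide_neg_pos)

lemma rat_code_less_iff:
  assumes "0 < d"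
  shows "rat_code m < real c / real d \<longleftrightarrow>
    odd (fst (prod_decode m)) \<or> fst (prod_decode m) div 2 * d < c * Suc (snd (prod_decode m))"
proof (cases "even (fst (prod_decode m))")
  case True
  then show ?thesis
    using of_nat_divide_less_iff[OF zero_less_Suc assms] by (simp add: rat_code_even)
next
  case False
  with rat_code_odd[of m] show ?thesis
    by (smt (verit) of_nat_0_le_iff divide_nonneg_nonneg)
qed

lemma less_rat_code_iff:
  assumes "0 < d"
  shows "real c / real d < rat_code m \<longleftrightarrow>
    even (fst (prod_decode m)) \<and> c * Suc (snd (prod_decode m)) < fst (prod_decode m) div 2 * d"
proof (cases "even (fst (prod_decode m))")
  case True
  then show ?thesis
    using of_nat_divide_less_iff[OF assms zero_less_Suc] by (simp add: rat_code_even)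
next
  case False
  with rat_code_odd[of m] show ?thesis
    by (smt (verit) of_nat_0_le_iff divide_nonneg_nonneg)
qed

lemma decidable_rat_code_less:
  assumes "computable X k f" "computable X k c" "computable X k d" "\<And>xs. 0 < d xs"
  shows "decidable X k (\<lambda>xs. rat_code (f xs) < real (c xs) / real (d xs))"
    and "decidable X k (\<lambda>xs. real (c xs) / real (d xs) < rat_code (f xs))"
  unfolding rat_code_less_iff[OF assms(4)] less_rat_code_iff[OF assms(4)]
  by (intro decidable_disj decidable_conj decidable_not decidable_even decidable_less computable_mult
      computable_div2 computable_Suc computable_prod_decode assms)+

lemma rat_code_in_Rats: "rat_code m \<in> \<rat>"
  unfolding rat_code_def by (simp split: prod.split)

lemma Rats_subset_range_rat_code: "\<rat> \<subseteq> range rat_code"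
proof
  fix r :: real assume "r \<in> \<rat>"
  then obtain a b where "0 < b" and r: "r = of_int a / of_int b"
    using Rats_cases' by blast
  then have "rat_code (prod_encode (int_encode a, nat b - 1)) = r"
    unfolding rat_code_def by simp
  then show "r \<in> range rat_code"
    by (metis rangeI)
qed

lemma inj_real_code: "inj real_code"
proof (rule injI)
  have separated: "real_code x \<noteq> real_code y" if "x < y" for x y
  proof -
    obtain r where "r \<in> \<rat>" "x < r" "r < y"
      using Rats_dense_in_real[OF \<open>x < y\<close>] by blast
    moreover obtain m where "rat_code m = r"
      using Rats_subset_range_rat_code \<open>r \<in> \<rat>\<close> by blast
    ultimately have "m \<in> real_code y - real_code x"
      unfolding real_code_def by auto
    then show ?thesis
      by blast
  qed
  show "real_code x = real_code y \<Longrightarrow> x = y" for x y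
    using separated[of x y] separated[of y x] by fastforce
qed

section \<open>The Cantor embedding\<close>

definition cantor_term :: "nat set \<Rightarrow> nat \<Rightarrow> real" where
  "cantor_term A k = (if k \<in> A then 2 / 3 ^ Suc k else 0)"

definition cantor_point :: "nat set \<Rightarrow> real" where
  "cantor_point A = (\<Sum>k. cantor_term A k)"

fun cantor_num :: "nat set \<Rightarrow> nat \<Rightarrow> nat" where
  "cantor_num A 0 = 0"
| "cantor_num A (Suc n) = 3 * cantor_num A n + (if n \<in> A then 2 else 0)"

lemma cantor_term_nonneg: "0 \<le> cantor_term A k"
  by (simp add: cantor_term_def)

lemma cantor_term_le: "cantor_term A k \<le> 2 / 3 * (1 / 3) ^ k"
  by (simp add: cantor_term_def power_divide)

lemma sums_geometric_tail: "(\<lambda>k. 2 / 3 * (1 / 3) ^ (k + n)) sums (1 / 3 ^ n :: real)"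
proof -
  have "(\<lambda>k. 2 / 3 * (1 / 3) ^ n * (1 / 3) ^ k) sums (2 / 3 * (1 / 3) ^ n * (1 / (1 - 1 / 3)) :: real)"
    by (intro sums_mult geometric_sums) simp
  then show ?thesis
    by (simp add: power_add power_divide mult_ac)
qed

lemma summable_cantor_tail: "summable (\<lambda>k. cantor_term A (k + n))"
  by (rule summable_comparison_test'[OF sums_summable[OF sums_geometric_tail[of n]]])
    (metis abs_of_nonneg real_norm_def cantor_term_le cantor_term_nonneg)

lemma cantor_tail_bounds:
  "0 \<le> (\<Sum>k. cantor_term A (k + n))" "(\<Sum>k. cantor_term A (k + n)) \<le> 1 / 3 ^ n"
  using suminf_nonneg[OF summable_cantor_tail cantor_term_nonneg]
    suminf_le[OF cantor_term_le summable_cantor_tail sums_summable[OF sums_geometric_tail]]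
    sums_unique[OF sums_geometric_tail[of n]]
  by simp_all

lemma cantor_num_div_eq_sum: "real (cantor_num A n) / 3 ^ n = (\<Sum>k<n. cantor_term A k)"
  by (induction n) (simp_all add: cantor_term_def field_simps)

lemma cantor_point_eq_partial_sum_plus_tail:
  "cantor_point A = real (cantor_num A n) / 3 ^ n + (\<Sum>k. cantor_term A (k + n))"
  using suminf_split_initial_segment[OF summable_cantor_tail[of A 0], of n]
  by (simp add: cantor_point_def cantor_num_div_eq_sum)

lemma cantor_point_lower: "real (cantor_num A n) / 3 ^ n \<le> cantor_point A"
  using cantor_point_eq_partial_sum_plus_tail[of A n] cantor_tail_bounds(1)[of A n] by linarith

lemma cantor_point_upper: "cantor_point A \<le> (real (cantor_num A n) + 1) / 3 ^ n"
  using cantor_point_eq_partial_sum_plus_tail[of A n] cantor_tail_bounds(2)[of A n]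
  by (simp add: add_divide_distrib)

lemma mem_iff_midpoint_less_cantor_point:
  "n \<in> A \<longleftrightarrow> real (2 * cantor_num A n + 1) / real (2 * 3 ^ n) < cantor_point A"
proof -
  define N where "N = real (cantor_num A n)"
  have midpoint: "real (2 * cantor_num A n + 1) / real (2 * 3 ^ n) = (N + 1 / 2) / 3 ^ n"
    unfolding N_def by (simp add: divide_simps)
  have next_num: "real (cantor_num A (Suc n)) / 3 ^ Suc n = (N + (if n \<in> A then 2 / 3 else 0)) / 3 ^ n"
    unfolding N_def by (simp add: divide_simps)
  show ?thesis
  proof
    assume "n \<in> A"
    then have "(N + 1 / 2) / 3 ^ n < real (cantor_num A (Suc n)) / 3 ^ Suc n"
      unfolding next_num by (simp add: divide_strict_right_mono)
    then show "real (2 * cantor_num A n + 1) / real (2 * 3 ^ n) < cantor_point A"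
      using cantor_point_lower[of A "Suc n"] midpoint by linarith
  next
    assume less: "real (2 * cantor_num A n + 1) / real (2 * 3 ^ n) < cantor_point A"
    show "n \<in> A"
    proof (rule ccontr)
      assume "n \<notin> A"
      then have "(real (cantor_num A (Suc n)) + 1) / 3 ^ Suc n = (N + 1 / 3) / 3 ^ n"
        unfolding N_def by (simp add: divide_simps)
      also have "\<dots> < (N + 1 / 2) / 3 ^ n"
        by (simp add: divide_strict_right_mono)
      finally show False
        using cantor_point_upper[of A "Suc n"] less midpoint by linarith
    qed
  qed
qed

lemma inj_cantor_point: "inj cantor_point"
proof (rule injI)
  fix A B assume eq: "cantor_point A = cantor_point B"
  have mem_iff: "n \<in> A \<longleftrightarrow> n \<in> B" if "cantor_num A n = cantor_num B n" for n
    unfolding mem_iff_midpoint_less_cantor_point[of n] eq that ..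
  have "cantor_num A n = cantor_num B n" for n
    by (induction n) (simp_all add: mem_iff)
  then show "A = B"
    using mem_iff by blast
qed

lemma less_cantor_point_iff: "q < cantor_point A \<longleftrightarrow> (\<exists>n. q < real (cantor_num A n) / 3 ^ n)"
proof
  assume "q < cantor_point A"
  then obtain n where n: "(1 / 3 :: real) ^ n < cantor_point A - q"
    using real_arch_pow_inv[of "cantor_point A - q" "1 / 3"] by auto
  have "q < real (cantor_num A n) / 3 ^ n"
    using n cantor_point_upper[of A n] by (simp add: power_divide add_divide_distrib)
  then show "\<exists>n. q < real (cantor_num A n) / 3 ^ n" ..
qed (use cantor_point_lower order.strict_trans2 in blast)

lemma cantor_point_less_iff: "cantor_point A < q \<longleftrightarrow> (\<exists>n. (real (cantor_num A n) + 1) / 3 ^ n < q)"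
proof
  assume "cantor_point A < q"
  then obtain n where n: "(1 / 3 :: real) ^ n < q - cantor_point A"
    using real_arch_pow_inv[of "q - cantor_point A" "1 / 3"] by auto
  have "(real (cantor_num A n) + 1) / 3 ^ n < q"
    using n cantor_point_lower[of A n] by (simp add: power_divide add_divide_distrib)
  then show "\<exists>n. (real (cantor_num A n) + 1) / 3 ^ n < q" ..
qed (use cantor_point_upper order.strict_trans1 in blast)

definition cantor_stage :: "nat \<Rightarrow> real set" where
  "cantor_stage n =
    (\<Union>B\<in>Pow {..<n}. {real (cantor_num B n) / 3 ^ n .. (real (cantor_num B n) + 1) / 3 ^ n})"

lemma cantor_num_cong: "(\<And>k. k < n \<Longrightarrow> k \<in> A \<longleftrightarrow> k \<in> B) \<Longrightarrow> cantor_num A n = cantor_num B n"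
  by (induction n) auto

lemma cantor_point_in_stage: "cantor_point A \<in> cantor_stage n"
proof -
  have "cantor_num A n = cantor_num (A \<inter> {..<n}) n"
    by (rule cantor_num_cong) simp
  then show ?thesis
    unfolding cantor_stage_def using cantor_point_lower[of A n] cantor_point_upper[of A n]
    by (intro UN_I[of "A \<inter> {..<n}"]) auto
qed

lemma compact_cantor_stage: "compact (cantor_stage n)"
  unfolding cantor_stage_def by (intro compact_UN) auto

lemma measure_cantor_stage: "measure lebesgue (cantor_stage n) \<le> (2 / 3) ^ n"
proof -
  have "measure lebesgue (cantor_stage n) \<le> (\<Sum>B\<in>Pow {..<n}. measure lebesgue
      {real (cantor_num B n) / 3 ^ n .. (real (cantor_num B n) + 1) / 3 ^ n})"
    unfolding cantor_stage_def by (rule measure_UNION_le) auto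
  also have "\<dots> = (\<Sum>B\<in>Pow {..<n}. 1 / 3 ^ n)"
    by (intro sum.cong) (auto simp: divide_right_mono diff_divide_distrib[symmetric])
  also have "\<dots> = (2 / 3) ^ n"
    by (simp add: card_Pow power_divide)
  finally show ?thesis .
qed

lemma negligible_closure_range_cantor_point: "negligible (closure (range cantor_point))"
  unfolding negligible_outer
proof (intro allI impI)
  fix e :: real assume "0 < e"
  then obtain n where n: "(2 / 3 :: real) ^ n < e"
    using real_arch_pow_inv[of e "2 / 3"] by auto
  have "closure (range cantor_point) \<subseteq> cantor_stage n"
    using cantor_point_in_stage compact_cantor_stage
    by (intro closure_minimal) (auto intro: compact_imp_closed)
  moreover have "measure lebesgue (cantor_stage n) < e"
    using measure_cantor_stage[of n] n by linarith
  ultimately show "\<exists>T. closure (range cantor_point) \<subseteq> T \<and> T \<in> lmeasurable \<and> measure lebesgue T < e"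
    using lmeasurable_compact[OF compact_cantor_stage] by blast
qed

lemma range_cantor_point_null: "range cantor_point \<in> null_sets lebesgue"
  using negligible_subset[OF negligible_closure_range_cantor_point closure_subset]
  by (simp add: negligible_iff_null_sets)

lemma meager_range_cantor_point: "meager (range cantor_point)"
proof -
  have "interior (closure (range cantor_point)) = {}"
    using negligible_subset[OF negligible_closure_range_cantor_point interior_subset]
      open_not_negligible[OF open_interior] by blast
  then show ?thesis
    unfolding meager_def nowhere_dense_def by (intro exI[of _ "\<lambda>n. range cantor_point"]) auto
qed

section \<open>Turing equivalence of a real and its Cantor point\<close>

definition midpoint_code :: "nat \<Rightarrow> nat \<Rightarrow> nat" where
  "midpoint_code n N = prod_encode (int_encode (int (2 * N + 1)), 2 * 3 ^ n - 1)"

lemma rat_code_midpoint_code: "rat_code (midpoint_code n N) = real (2 * N + 1) / real (2 * 3 ^ n)"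
proof -
  have "Suc (2 * 3 ^ n - 1) = 2 * 3 ^ n"
    by simp
  then show ?thesis
    unfolding rat_code_def midpoint_code_def by (simp only: prod_encode_inverse int_encode_inverse) simp
qed

lemma midpoint_code_mem_real_code_cantor_point:
  "midpoint_code n (cantor_num A n) \<in> real_code (cantor_point A) \<longleftrightarrow> n \<in> A"
  unfolding real_code_def mem_Collect_eq rat_code_midpoint_code
  by (rule mem_iff_midpoint_less_cantor_point[symmetric])

lemma computable_midpoint_code:
  assumes "computable X k f" "computable X k g"
  shows "computable X k (\<lambda>xs. midpoint_code (f xs) (g xs))"
proof -
  have "int_encode (int m) = 2 * m" for m
    by (simp add: int_encode_def sum_encode_def)
  then show ?thesis
    unfolding midpoint_code_def
    by (simp only:) (intro computable_prod_encode computable_mult computable_add computable_diff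
        computable_power computable_const assms)
qed

fun cut_cantor_num :: "nat set \<Rightarrow> nat \<Rightarrow> nat" where
  "cut_cantor_num Y 0 = 0"
| "cut_cantor_num Y (Suc n) =
    3 * cut_cantor_num Y n + (if midpoint_code n (cut_cantor_num Y n) \<in> Y then 2 else 0)"

lemma cut_cantor_num_real_code: "cut_cantor_num (real_code (cantor_point A)) n = cantor_num A n"
  by (induction n) (simp_all add: midpoint_code_mem_real_code_cantor_point)

lemma computable_cut_cantor_num:
  "computable Y k f \<Longrightarrow> computable Y k (\<lambda>xs. cut_cantor_num Y (f xs))"
proof (rule computable_unary_rec[where h = "cut_cantor_num Y"
      and s = "\<lambda>n y. 3 * y + (if midpoint_code n y \<in> Y then 2 else 0)"])
  show "computable Y 2 (\<lambda>xs. 3 * xs ! 1 + (if midpoint_code (xs ! 0) (xs ! 1) \<in> Y then 2 else 0))"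
    by (intro computable_add computable_mult computable_If decidable_mem computable_midpoint_code
        computable_const computable_proj) simp_all
qed simp_all

lemma computable_cantor_num:
  "computable A k f \<Longrightarrow> computable A k (\<lambda>xs. cantor_num A (f xs))"
proof (rule computable_unary_rec[where h = "cantor_num A"
      and s = "\<lambda>n y. 3 * y + (if n \<in> A then 2 else 0)"])
  show "computable A 2 (\<lambda>xs. 3 * xs ! 1 + (if xs ! 0 \<in> A then 2 else 0))"
    by (intro computable_add computable_mult computable_If decidable_mem computable_const
        computable_proj) simp_all
qed simp_all

theorem turing_le_set_cantor_code: "turing_le A (real_code (cantor_point A))"
proof (rule decidable_imp_turing_le)
  let ?Y = "real_code (cantor_point A)"
  have "decidable ?Y 1 (\<lambda>xs. midpoint_code (xs ! 0) (cut_cantor_num ?Y (xs ! 0)) \<in> ?Y)"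
    by (intro decidable_mem computable_midpoint_code computable_cut_cantor_num computable_proj) simp_all
  then show "decidable ?Y 1 (\<lambda>xs. xs ! 0 \<in> A)"
    by (rule decidable_cong) (simp add: cut_cantor_num_real_code midpoint_code_mem_real_code_cantor_point)
qed

theorem turing_le_cantor_code_set:
  assumes irrational: "cantor_point A \<notin> \<rat>"
  shows "turing_le (real_code (cantor_point A)) A"
proof (rule decidable_imp_turing_le)
  define stage_excludes where "stage_excludes m n \<longleftrightarrow>
      rat_code m < real (cantor_num A n) / real (3 ^ n) \<or>
      real (cantor_num A n + 1) / real (3 ^ n) < rat_code m"
    for m n
  have ex: "\<exists>n. stage_excludes m n" for m
  proof -
    have "rat_code m \<noteq> cantor_point A"
      using irrational rat_code_in_Rats by metis
    then consider "rat_code m < cantor_point A" | "cantor_point A < rat_code m"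
      by linarith
    then show ?thesis
      unfolding stage_excludes_def less_cantor_point_iff cantor_point_less_iff
      by cases (auto simp: add.commute)
  qed
  define stage where "stage m = (LEAST n. stage_excludes m n)" for m
  have "computable A 1 (\<lambda>xs. LEAST n. stage_excludes ((n # xs) ! 1) ((n # xs) ! 0))"
    unfolding stage_excludes_def
    by (intro computable_Least_decidable decidable_disj decidable_rat_code_less computable_cantor_num
        computable_add computable_const computable_power computable_proj)
      (use ex in \<open>auto simp: stage_excludes_def\<close>)
  then have "computable A 1 (\<lambda>xs. stage (xs ! 0))"
    by (simp add: stage_def)
  then have decidable_below: "decidable A 1
      (\<lambda>xs. rat_code (xs ! 0) < real (cantor_num A (stage (xs ! 0))) / real (3 ^ stage (xs ! 0)))"
    by (intro decidable_rat_code_less computable_cantor_num computable_power computable_proj) simp_all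
  have mem_iff_below: "m \<in> real_code (cantor_point A) \<longleftrightarrow>
      rat_code m < real (cantor_num A (stage m)) / real (3 ^ stage m)" for m
  proof -
    have "stage_excludes m (stage m)"
      unfolding stage_def by (rule LeastI_ex[OF ex])
    then show ?thesis
      using cantor_point_lower[of A "stage m"] cantor_point_upper[of A "stage m"]
      unfolding stage_excludes_def real_code_def by (auto simp: add_divide_distrib)
  qed
  show "decidable A 1 (\<lambda>xs. xs ! 0 \<in> real_code (cantor_point A))"
    using decidable_below by (rule decidable_cong) (simp only: mem_iff_below)
qed

lemma turing_equiv_cantor_point_real_code:
  assumes "cantor_point (real_code x) \<notin> \<rat>"
  shows "turing_equiv_real (cantor_point (real_code x)) x"
  unfolding turing_equiv_real_def
  using turing_le_cantor_code_set[OF assms] turing_le_set_cantor_code by blast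

lemma uncountable_reals_of_degrees_Int_cantor:
  assumes "uncountable (reals_of_degrees S)"
  shows "uncountable (reals_of_degrees S \<inter> range cantor_point)"
proof
  assume countable_Int: "countable (reals_of_degrees S \<inter> range cantor_point)"
  define R where "R = reals_of_degrees S"
  define g where "g = cantor_point \<circ> real_code"
  define E where "E = {x. g x \<in> \<rat>}"
  have inj_g: "inj g"
    unfolding g_def using inj_cantor_point inj_real_code by (rule inj_compose)
  have "countable (g ` E)"
    by (rule countable_subset[OF _ countable_rat]) (auto simp: E_def)
  then have "countable E"
    using inj_g by (auto dest: countable_image_inj_on[OF _ inj_on_subset])
  have "g ` (R - E) \<subseteq> R \<inter> range cantor_point"
  proof
    fix y assume "y \<in> g ` (R - E)"
    then obtain x where "x \<in> R" "g x \<notin> \<rat>" "y = g x"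
      unfolding E_def by blast
    then show "y \<in> R \<inter> range cantor_point"
      unfolding R_def g_def
      using reals_of_degrees_turing_equiv turing_equiv_cantor_point_real_code by auto
  qed
  then have "countable (g ` (R - E))"
    using countable_Int countable_subset unfolding R_def by blast
  then have "countable (R - E)"
    using inj_g by (auto dest: countable_image_inj_on[OF _ inj_on_subset])
  with \<open>countable E\<close> have "countable R"
    by (metis countable_Un Un_Diff_cancel2 countable_subset sup_ge1)
  with assms show False
    unfolding R_def by blast
qed

theorem mainTheorem15:
  shows "\<not> (\<exists>S. S \<subseteq> turing_degrees \<and>
            (luzin_set (reals_of_degrees S) \<or> sierpinski_set (reals_of_degrees S)))"
proof
  assume "\<exists>S. S \<subseteq> turing_degrees \<and>
            (luzin_set (reals_of_degrees S) \<or> sierpinski_set (reals_of_degrees S))"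
  then obtain S where "luzin_set (reals_of_degrees S) \<or> sierpinski_set (reals_of_degrees S)"
    by blast
  then have "uncountable (reals_of_degrees S)" "countable (reals_of_degrees S \<inter> range cantor_point)"
    using meager_range_cantor_point range_cantor_point_null
    unfolding luzin_set_def sierpinski_set_def by auto
  then show False
    using uncountable_reals_of_degrees_Int_cantor by blast
qed

end
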